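(* For $0\le d\le r<\min\{m,n\}$ there is a surjection of $\mathfrak{S}_n\times\mathfrak{S}_m$-modules $R(\mathcal{Z}_{n,m,r})_d\twoheadrightarrow R(\mathcal{Z}_{n,m,r+1})_d$.
   Context: Fix positive integers $n,m$. $\mathbb{C}[\mathbf{x}_{n\times m}]$ is the polynomial ring in variables $x_{i,j}$; $\mathfrak{S}_n\times\mathfrak{S}_m$ acts by $(g,h)\cdot x_{i,j}=x_{g(i),h(j)}$. For finite stable $\mathcal{Z}\subseteq\mathrm{Mat}_{n\times m}(\mathbb{C})$, $R(\mathcal{Z})=\mathbb{C}[\mathbf{x}_{n\times m}]/\mathrm{gr}\,\mathbf{I}(\mathcal{Z})$, where $\mathbf{I}(\mathcal{Z})$ is the vanishing ideal and $\mathrm{gr}\,\mathbf{I}(\mathcal{Z})$ the ideal generated by top-degree homogeneous components of its nonzero elements; $R(\mathcal{Z})_d$ is its degree-$d$ component. $\mathcal{Z}_{n,m,r}$ is the set of $n\times m$ $0/1$ matrices with exactly $r$ ones and at most one $1$ in each row and column. *)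

theory Defs
  imports Complex_Main "HOL-Library.Poly_Mapping" "HOL-Combinatorics.Permutations"
begin

text \<open>Polynomials in the variables x_(i,j) (indexed by pairs of naturals) with
complex coefficients: a monomial is a finitely supported exponent map, a polynomial
a finitely supported coefficient map on monomials.\<close>

type_synonym mono = "(nat \<times> nat) \<Rightarrow>\<^sub>0 nat"
type_synonym mpoly = "mono \<Rightarrow>\<^sub>0 complex"

definition polys :: "nat \<Rightarrow> nat \<Rightarrow> mpoly set" where
  "polys n m = {f. \<forall>M\<in>Poly_Mapping.keys f. \<forall>v\<in>Poly_Mapping.keys M. fst v < n \<and> snd v < m}"

definition tdeg :: "mono \<Rightarrow> nat" where
  "tdeg M = (\<Sum>v\<in>Poly_Mapping.keys M. Poly_Mapping.lookup M v)"

definition homog :: "nat \<Rightarrow> mpoly \<Rightarrow> bool" where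
  "homog d f \<longleftrightarrow> (\<forall>M\<in>Poly_Mapping.keys f. tdeg M = d)"

definition pdeg :: "mpoly \<Rightarrow> nat" where
  "pdeg f = Max (tdeg ` Poly_Mapping.keys f)"

definition top_part :: "mpoly \<Rightarrow> mpoly" where
  "top_part f = Abs_poly_mapping (\<lambda>M. if tdeg M = pdeg f then Poly_Mapping.lookup f M else 0)"

definition eval_at :: "mpoly \<Rightarrow> (nat \<times> nat \<Rightarrow> complex) \<Rightarrow> complex" where
  "eval_at f A = (\<Sum>M\<in>Poly_Mapping.keys f. Poly_Mapping.lookup f M * (\<Prod>v\<in>Poly_Mapping.keys M. A v ^ Poly_Mapping.lookup M v))"

definition vanishing_ideal :: "nat \<Rightarrow> nat \<Rightarrow> (nat \<times> nat \<Rightarrow> complex) set \<Rightarrow> mpoly set" where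
  "vanishing_ideal n m Z = {f \<in> polys n m. \<forall>A\<in>Z. eval_at f A = 0}"

definition ideal_gen :: "mpoly set \<Rightarrow> mpoly set \<Rightarrow> mpoly set" where
  "ideal_gen P G = {f. \<exists>(k::nat) g h. (\<forall>i<k. g i \<in> P \<and> h i \<in> G) \<and> f = (\<Sum>i<k. g i * h i)}"

definition gr_ideal :: "nat \<Rightarrow> nat \<Rightarrow> (nat \<times> nat \<Rightarrow> complex) set \<Rightarrow> mpoly set" where
  "gr_ideal n m Z = ideal_gen (polys n m) (top_part ` (vanishing_ideal n m Z - {0}))"

definition Zset :: "nat \<Rightarrow> nat \<Rightarrow> nat \<Rightarrow> (nat \<times> nat \<Rightarrow> complex) set" where
  "Zset n m r = {A. (\<forall>i j. A (i,j) = 0 \<or> A (i,j) = 1)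
      \<and> (\<forall>i j. A (i,j) \<noteq> 0 \<longrightarrow> i < n \<and> j < m)
      \<and> card {p. A p = 1} = r
      \<and> (\<forall>i j j'. A (i,j) = 1 \<and> A (i,j') = 1 \<longrightarrow> j = j')
      \<and> (\<forall>i i' j. A (i,j) = 1 \<and> A (i',j) = 1 \<longrightarrow> i = i')}"

definition act_mono :: "(nat \<Rightarrow> nat) \<Rightarrow> (nat \<Rightarrow> nat) \<Rightarrow> mono \<Rightarrow> mono" where
  "act_mono g h M = Poly_Mapping.map_key (\<lambda>(i,j). (g i, h j)) M"

definition act :: "(nat \<Rightarrow> nat) \<Rightarrow> (nat \<Rightarrow> nat) \<Rightarrow> mpoly \<Rightarrow> mpoly" where
  "act g h f = Poly_Mapping.map_key (act_mono g h) f"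

text \<open>R(Z)_d is the quotient of the degree-d homogeneous polynomials P_d by
gr I(Z) \<inter> P_d.  A map R(Z1)_d \<rightarrow> R(Z2)_d is represented by a lift
\<phi> : P_d \<rightarrow> P_d; the following predicate says \<phi> induces a well-defined,
C-linear, S_n x S_m-equivariant, surjective map of the quotients.\<close>
definition equiv_surj_quot ::
  "nat \<Rightarrow> nat \<Rightarrow> nat \<Rightarrow> mpoly set \<Rightarrow> mpoly set \<Rightarrow> (mpoly \<Rightarrow> mpoly) \<Rightarrow> bool" where
  "equiv_surj_quot n m d J1 J2 \<phi> \<longleftrightarrow>
     (let Pd = {f \<in> polys n m. homog d f} in
      (\<forall>f\<in>Pd. \<phi> f \<in> Pd)
    \<and> (\<forall>f\<in>Pd. \<forall>g\<in>Pd. f - g \<in> J1 \<longrightarrow> \<phi> f - \<phi> g \<in> J2)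
    \<and> (\<forall>f\<in>Pd. \<forall>g\<in>Pd. \<forall>a b::complex.
          \<phi> (Poly_Mapping.map ((*) a) f + Poly_Mapping.map ((*) b) g)
          - (Poly_Mapping.map ((*) a) (\<phi> f) + Poly_Mapping.map ((*) b) (\<phi> g)) \<in> J2)
    \<and> (\<forall>g h. g permutes {..<n} \<and> h permutes {..<m} \<longrightarrow>
          (\<forall>f\<in>Pd. \<phi> (act g h f) - act g h (\<phi> f) \<in> J2))
    \<and> (\<forall>q\<in>Pd. \<exists>f\<in>Pd. \<phi> f - q \<in> J2))"

end

theory Submission
  imports Defs
begin

text \<open>The identity of P_d induces the surjection, so it suffices that every homogeneous
element of degree d \<le> r of gr I(Z_r) lies in gr I(Z_(r+1)).  As gr I(Z_r) is generated by
homogeneous top parts, its degree-d part only needs the generators top(f) with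
f \<in> I(Z_r) and deg f \<le> d \<le> r.  For such f the polynomial
T f = sum_a (r + 1 - |supp a|) f_a x^a vanishes on Z_(r+1): its value at A is the sum of
the values of f at the r + 1 matrices of Z_r obtained by deleting one 1 of A.  The top part
of T f differs from (r + 1 - deg f) top(f) only in non-squarefree monomials, and these lie
in gr I(Z_(r+1)) because x_v^2 - x_v vanishes on 0/1 matrices.  Since r + 1 - deg f \<noteq> 0,
top(f) \<in> gr I(Z_(r+1)).\<close>

section \<open>The polynomial ring and its ideals\<close>

lemma polys_keys_subset:
  "f \<in> polys n m \<Longrightarrow> Poly_Mapping.keys g \<subseteq> Poly_Mapping.keys f \<Longrightarrow> g \<in> polys n m"
  by (auto simp: polys_def)

lemma single_mem_polys:
  "\<forall>v\<in>Poly_Mapping.keys M. fst v < n \<and> snd v < m \<Longrightarrow> Poly_Mapping.single M c \<in> polys n m"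
  by (simp add: polys_def)

lemma one_mem_polys: "1 \<in> polys n m"
  by (simp add: polys_def)

lemma polys_mult:
  assumes "f \<in> polys n m" "g \<in> polys n m"
  shows "f * g \<in> polys n m"
  unfolding polys_def
proof (intro CollectI ballI)
  fix M v
  assume "M \<in> Poly_Mapping.keys (f * g)" and v: "v \<in> Poly_Mapping.keys M"
  then obtain a b where "M = a + b" "a \<in> Poly_Mapping.keys f" "b \<in> Poly_Mapping.keys g"
    using keys_mult[of f g] by blast
  with v keys_add[of a b] assms show "fst v < n \<and> snd v < m"
    by (auto simp: polys_def)
qed

lemma ideal_gen_zero: "0 \<in> ideal_gen P G"
  unfolding ideal_gen_def by (intro CollectI exI[of _ 0]) auto

lemma ideal_gen_add:
  assumes "f \<in> ideal_gen P G" "g \<in> ideal_gen P G"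
  shows "f + g \<in> ideal_gen P G"
proof -
  obtain k1 :: nat and g1 h1 where 1: "\<forall>i<k1. g1 i \<in> P \<and> h1 i \<in> G" "f = (\<Sum>i<k1. g1 i * h1 i)"
    using assms(1) unfolding ideal_gen_def by blast
  obtain k2 :: nat and g2 h2 where 2: "\<forall>i<k2. g2 i \<in> P \<and> h2 i \<in> G" "g = (\<Sum>i<k2. g2 i * h2 i)"
    using assms(2) unfolding ideal_gen_def by blast
  define g' where "g' i = (if i < k1 then g1 i else g2 (i - k1))" for i
  define h' where "h' i = (if i < k1 then h1 i else h2 (i - k1))" for i
  have "(\<Sum>i<k1 + k2. g' i * h' i) = (\<Sum>i<k1. g' i * h' i) + (\<Sum>i<k2. g' (k1 + i) * h' (k1 + i))"
    by (induction k2) (auto simp: add.assoc)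
  also have "\<dots> = f + g"
    unfolding 1 2 g'_def h'_def by simp
  finally have "f + g = (\<Sum>i<k1 + k2. g' i * h' i)" ..
  moreover have "\<forall>i<k1 + k2. g' i \<in> P \<and> h' i \<in> G"
    using 1 2 unfolding g'_def h'_def by auto
  ultimately show ?thesis
    unfolding ideal_gen_def by blast
qed

lemma ideal_gen_sum:
  "finite A \<Longrightarrow> (\<And>i. i \<in> A \<Longrightarrow> f i \<in> ideal_gen P G) \<Longrightarrow> sum f A \<in> ideal_gen P G"
  by (induction A rule: finite_induct) (auto intro: ideal_gen_add ideal_gen_zero)

lemma ideal_gen_mult:
  assumes "\<And>a b. a \<in> P \<Longrightarrow> b \<in> P \<Longrightarrow> a * b \<in> P" "p \<in> P" "f \<in> ideal_gen P G"
  shows "p * f \<in> ideal_gen P G"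
proof -
  obtain k :: nat and g h where kgh: "\<forall>i<k. g i \<in> P \<and> h i \<in> G" "f = (\<Sum>i<k. g i * h i)"
    using assms(3) unfolding ideal_gen_def by blast
  have "p * f = (\<Sum>i<k. (p * g i) * h i)"
    unfolding kgh by (simp add: sum_distrib_left mult.assoc)
  with kgh assms(1,2) show ?thesis
    unfolding ideal_gen_def by (intro CollectI exI[of _ k] exI[of _ "\<lambda>i. p * g i"] exI[of _ h]) auto
qed

lemma ideal_gen_generator: "1 \<in> P \<Longrightarrow> h \<in> G \<Longrightarrow> h \<in> ideal_gen P G"
  unfolding ideal_gen_def by (intro CollectI exI[of _ 1] exI[of _ "\<lambda>_. 1"] exI[of _ "\<lambda>_. h"]) auto

lemma gr_ideal_add: "f \<in> gr_ideal n m Z \<Longrightarrow> g \<in> gr_ideal n m Z \<Longrightarrow> f + g \<in> gr_ideal n m Z"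
  unfolding gr_ideal_def by (rule ideal_gen_add)

lemma gr_ideal_sum:
  "finite A \<Longrightarrow> (\<And>i. i \<in> A \<Longrightarrow> f i \<in> gr_ideal n m Z) \<Longrightarrow> sum f A \<in> gr_ideal n m Z"
  unfolding gr_ideal_def by (rule ideal_gen_sum)

lemma gr_ideal_mult: "p \<in> polys n m \<Longrightarrow> f \<in> gr_ideal n m Z \<Longrightarrow> p * f \<in> gr_ideal n m Z"
  unfolding gr_ideal_def by (rule ideal_gen_mult) (auto intro: polys_mult)

lemma top_part_mem_gr_ideal:
  "f \<in> vanishing_ideal n m Z \<Longrightarrow> f \<noteq> 0 \<Longrightarrow> top_part f \<in> gr_ideal n m Z"
  unfolding gr_ideal_def by (rule ideal_gen_generator) (auto simp: one_mem_polys)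

lemma gr_ideal_scale_cancel:
  assumes "c \<noteq> 0" "Poly_Mapping.map ((*) c) p \<in> gr_ideal n m Z"
  shows "p \<in> gr_ideal n m Z"
proof -
  have "Poly_Mapping.single 0 (1 / c) * Poly_Mapping.map ((*) c) p \<in> gr_ideal n m Z"
    using assms(2) by (intro gr_ideal_mult single_mem_polys) simp_all
  moreover have "Poly_Mapping.single 0 (1 / c) * Poly_Mapping.map ((*) c) p = p"
    using assms(1) by (simp add: mult_map_scale_conv_mult mult.assoc[symmetric] mult_single)
  ultimately show ?thesis
    by simp
qed

section \<open>Degrees and homogeneous components\<close>

lemma tdeg_eq_sum_superset:
  "finite K \<Longrightarrow> Poly_Mapping.keys M \<subseteq> K \<Longrightarrow> tdeg M = (\<Sum>v\<in>K. Poly_Mapping.lookup M v)"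
  unfolding tdeg_def by (rule sum.mono_neutral_left) (auto simp: in_keys_iff)

lemma tdeg_add: "tdeg (a + b) = tdeg a + tdeg b"
proof -
  let ?K = "Poly_Mapping.keys a \<union> Poly_Mapping.keys b"
  have "tdeg (a + b) = (\<Sum>v\<in>?K. Poly_Mapping.lookup (a + b) v)"
    using keys_add[of a b] by (intro tdeg_eq_sum_superset) auto
  also have "\<dots> = (\<Sum>v\<in>?K. Poly_Mapping.lookup a v) + (\<Sum>v\<in>?K. Poly_Mapping.lookup b v)"
    by (simp add: lookup_add sum.distrib)
  also have "\<dots> = tdeg a + tdeg b"
    by (simp add: tdeg_eq_sum_superset[symmetric])
  finally show ?thesis .
qed

lemma tdeg_single: "tdeg (Poly_Mapping.single v k) = k"
  by (simp add: tdeg_def)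

lemma tdeg_le_pdeg: "\<alpha> \<in> Poly_Mapping.keys f \<Longrightarrow> tdeg \<alpha> \<le> pdeg f"
  unfolding pdeg_def by (simp add: finite_keys)

lemma card_keys_le_tdeg: "card (Poly_Mapping.keys a) \<le> tdeg a"
  unfolding tdeg_def by (rule order_trans[OF _ sum_mono[of _ "\<lambda>_. 1"]]) (auto simp: in_keys_iff)

lemma exponent_ge_2_if_card_keys_less_tdeg:
  assumes "card (Poly_Mapping.keys a) < tdeg a"
  shows "\<exists>v. 2 \<le> Poly_Mapping.lookup a v"
proof (rule ccontr)
  assume "\<nexists>v. 2 \<le> Poly_Mapping.lookup a v"
  then have "Poly_Mapping.lookup a v = 1" if "v \<in> Poly_Mapping.keys a" for v
    using that by (metis in_keys_iff One_nat_def less_2_cases not_le)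
  then have "tdeg a = card (Poly_Mapping.keys a)"
    unfolding tdeg_def by simp
  with assms show False
    by simp
qed

lemma homog_diff: "homog d f \<Longrightarrow> homog d g \<Longrightarrow> homog d (f - g)"
  unfolding homog_def using keys_diff[of f g] by blast

lemma homog_mult: "homog a p \<Longrightarrow> homog b q \<Longrightarrow> homog (a + b) (p * q)"
  unfolding homog_def using keys_mult[of p q] by (force simp: tdeg_add)

definition homog_part :: "nat \<Rightarrow> mpoly \<Rightarrow> mpoly" where
  "homog_part d p = Poly_Mapping.mapp (\<lambda>\<alpha> c. if tdeg \<alpha> = d then c else 0) p"

lemma lookup_homog_part:
  "Poly_Mapping.lookup (homog_part d p) \<alpha> = (if tdeg \<alpha> = d then Poly_Mapping.lookup p \<alpha> else 0)"
  by (simp add: homog_part_def lookup_mapp when_def in_keys_iff)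

lemma keys_homog_part_subset: "Poly_Mapping.keys (homog_part d p) \<subseteq> Poly_Mapping.keys p"
  by (simp add: homog_part_def keys_mapp_subset)

lemma homog_homog_part: "homog d (homog_part d p)"
  by (auto simp: homog_def in_keys_iff lookup_homog_part split: if_splits)

lemma top_part_eq_homog_part: "top_part f = homog_part (pdeg f) f"
  by (simp add: top_part_def lookup_homog_part[symmetric])

lemma homog_top_part: "homog (pdeg f) (top_part f)"
  by (simp add: top_part_eq_homog_part homog_homog_part)

lemma homog_part_add: "homog_part d (p + q) = homog_part d p + homog_part d q"
  by (rule poly_mapping_eqI) (simp add: lookup_homog_part lookup_add)

lemma homog_part_sum: "homog_part d (sum f A) = (\<Sum>i\<in>A. homog_part d (f i))"
  by (rule poly_mapping_eqI) (simp add: lookup_homog_part lookup_sum)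

lemma homog_part_eq_self: "homog d p \<Longrightarrow> homog_part d p = p"
  by (rule poly_mapping_eqI) (auto simp: lookup_homog_part homog_def in_keys_iff)

lemma homog_part_mult_eq_0:
  assumes "homog e h" "\<And>a. a \<in> Poly_Mapping.keys g \<Longrightarrow> tdeg a + e \<noteq> d"
  shows "homog_part d (g * h) = 0"
proof (rule poly_mapping_eqI)
  fix \<alpha>
  have "tdeg \<alpha> \<noteq> d" if "\<alpha> \<in> Poly_Mapping.keys (g * h)"
    using that keys_mult[of g h] assms by (force simp: homog_def tdeg_add)
  then show "Poly_Mapping.lookup (homog_part d (g * h)) \<alpha> = Poly_Mapping.lookup 0 \<alpha>"
    by (auto simp: lookup_homog_part in_keys_iff)
qed

lemma homog_part_mult_homog:
  assumes h: "homog e h"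
  shows "homog_part d (g * h) = (if e \<le> d then homog_part (d - e) g * h else 0)"
proof (cases "e \<le> d")
  case True
  define p where "p = homog_part (d - e) g"
  have "homog (d - e + e) (p * h)"
    unfolding p_def by (rule homog_mult[OF homog_homog_part h])
  then have "homog_part d (p * h) = p * h"
    using True by (simp add: homog_part_eq_self)
  moreover have "homog_part d ((g - p) * h) = 0"
    using h by (rule homog_part_mult_eq_0) (use True in \<open>auto simp: p_def in_keys_iff lookup_minus lookup_homog_part\<close>)
  moreover have "g * h = p * h + (g - p) * h"
    by (simp add: algebra_simps)
  ultimately show ?thesis
    using True by (simp add: homog_part_add p_def)
next
  case False
  then show ?thesis
    using homog_part_mult_eq_0[OF h, of g d] by simp
qed

text \<open>Taking the degree-d part of F = \<Sum> g_i h_i replaces each g_i by its component of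
degree d - deg h_i and kills the terms with deg h_i > d.\<close>

lemma homog_mem_ideal_gen_low_degree:
  assumes F: "F \<in> ideal_gen (polys n m) G" "homog d F"
    and G: "\<And>h. h \<in> G \<Longrightarrow> \<exists>e. homog e h \<and> (e \<le> d \<longrightarrow> h \<in> ideal_gen (polys n m) G')"
  shows "F \<in> ideal_gen (polys n m) G'"
proof -
  obtain k :: nat and g h where kgh: "\<forall>i<k. g i \<in> polys n m \<and> h i \<in> G" "F = (\<Sum>i<k. g i * h i)"
    using F(1) unfolding ideal_gen_def by blast
  have "\<forall>i. \<exists>e. i < k \<longrightarrow> homog e (h i) \<and> (e \<le> d \<longrightarrow> h i \<in> ideal_gen (polys n m) G')"
    using G kgh(1) by blast
  then obtain e where e: "\<And>i. i < k \<Longrightarrow> homog (e i) (h i) \<and> (e i \<le> d \<longrightarrow> h i \<in> ideal_gen (polys n m) G')"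
    by metis
  have "F = homog_part d F"
    using F(2) by (simp add: homog_part_eq_self)
  also have "\<dots> = (\<Sum>i<k. if e i \<le> d then homog_part (d - e i) (g i) * h i else 0)"
    unfolding kgh(2) homog_part_sum using e by (intro sum.cong) (auto simp: homog_part_mult_homog)
  also have "\<dots> \<in> ideal_gen (polys n m) G'"
  proof (rule ideal_gen_sum)
    fix i
    assume "i \<in> {..<k}"
    then have "homog_part (d - e i) (g i) \<in> polys n m" "e i \<le> d \<Longrightarrow> h i \<in> ideal_gen (polys n m) G'"
      using kgh(1) e keys_homog_part_subset polys_keys_subset by auto
    then show "(if e i \<le> d then homog_part (d - e i) (g i) * h i else 0) \<in> ideal_gen (polys n m) G'"
      by (auto intro: ideal_gen_mult polys_mult ideal_gen_zero)
  qed simp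
  finally show ?thesis .
qed

section \<open>Evaluation at 0/1 matrices\<close>

lemma eval_at_zero_one:
  assumes K: "finite K" "Poly_Mapping.keys f \<subseteq> K" and B: "\<forall>p. B p = 0 \<or> B p = 1"
  shows "eval_at f B = (\<Sum>\<alpha>\<in>K. Poly_Mapping.lookup f \<alpha> *
           (if Poly_Mapping.keys \<alpha> \<subseteq> {p. B p = 1} then 1 else 0))"
proof -
  have monomial: "(\<Prod>v\<in>Poly_Mapping.keys \<alpha>. B v ^ Poly_Mapping.lookup \<alpha> v)
      = (if Poly_Mapping.keys \<alpha> \<subseteq> {p. B p = 1} then 1 else 0)" for \<alpha>
  proof (cases "Poly_Mapping.keys \<alpha> \<subseteq> {p. B p = 1}")
    case False
    then obtain w where "w \<in> Poly_Mapping.keys \<alpha>" "B w = 0"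
      using B by auto
    with False show ?thesis
      by (auto simp: in_keys_iff intro: prod_zero[OF finite_keys])
  qed (auto intro!: prod.neutral)
  have "eval_at f B = (\<Sum>\<alpha>\<in>Poly_Mapping.keys f. Poly_Mapping.lookup f \<alpha> *
           (if Poly_Mapping.keys \<alpha> \<subseteq> {p. B p = 1} then 1 else 0))"
    unfolding eval_at_def monomial ..
  also have "\<dots> = (\<Sum>\<alpha>\<in>K. Poly_Mapping.lookup f \<alpha> *
           (if Poly_Mapping.keys \<alpha> \<subseteq> {p. B p = 1} then 1 else 0))"
    using K by (intro sum.mono_neutral_left) (auto simp: in_keys_iff)
  finally show ?thesis .
qed

lemma Zset_zero_one: "A \<in> Zset n m r \<Longrightarrow> A p = 0 \<or> A p = 1"
  unfolding Zset_def by (cases p) blast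

lemma Zset_card_ones: "A \<in> Zset n m r \<Longrightarrow> card {p. A p = 1} = r"
  unfolding Zset_def by blast

lemma Zset_finite_ones:
  assumes "A \<in> Zset n m r"
  shows "finite {p. A p = 1}"
proof -
  have range: "\<forall>i j. A (i, j) \<noteq> 0 \<longrightarrow> i < n \<and> j < m"
    using assms unfolding Zset_def by blast
  have "i < n \<and> j < m" if "A (i, j) = 1" for i j
  proof -
    have "A (i, j) \<noteq> 0"
      using that by simp
    with range show ?thesis
      by blast
  qed
  then have "{p. A p = 1} \<subseteq> {..<n} \<times> {..<m}"
    by auto
  then show ?thesis
    by (rule finite_subset) simp
qed

lemma Zset_delete_one:
  assumes A: "A \<in> Zset n m (Suc r)" and v: "A v = 1"
  shows "A(v := 0) \<in> Zset n m r"
proof -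
  have "{p. (A(v := 0)) p = 1} = {p. A p = 1} - {v}"
    by auto
  then have "card {p. (A(v := 0)) p = 1} = r"
    using Zset_finite_ones[OF A] Zset_card_ones[OF A] v by simp
  moreover have "\<forall>i j. A (i, j) = 0 \<or> A (i, j) = 1"
    "\<forall>i j. A (i, j) \<noteq> 0 \<longrightarrow> i < n \<and> j < m"
    "\<forall>i j j'. A (i, j) = 1 \<and> A (i, j') = 1 \<longrightarrow> j = j'"
    "\<forall>i i' j. A (i, j) = 1 \<and> A (i', j) = 1 \<longrightarrow> i = i'"
    using A unfolding Zset_def by blast+
  ultimately show ?thesis
    unfolding Zset_def mem_Collect_eq by (intro conjI allI impI; simp split: if_splits; meson)
qed

section \<open>Non-squarefree monomials\<close>

definition square_minus_var :: "nat \<times> nat \<Rightarrow> mpoly" where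
  "square_minus_var v =
     Poly_Mapping.single (Poly_Mapping.single v 2) 1 - Poly_Mapping.single (Poly_Mapping.single v 1) 1"

lemma single_2_neq_single_1: "Poly_Mapping.single v (2::nat) \<noteq> Poly_Mapping.single v 1"
  by (metis lookup_single_eq numeral_eq_one_iff semiring_norm(85))

lemma keys_square_minus_var:
  "Poly_Mapping.keys (square_minus_var v) = {Poly_Mapping.single v 2, Poly_Mapping.single v 1}"
  using single_2_neq_single_1[of v]
  by (auto simp: square_minus_var_def in_keys_iff lookup_minus lookup_single when_def split: if_splits)

lemma top_part_square_minus_var:
  "top_part (square_minus_var v) = Poly_Mapping.single (Poly_Mapping.single v 2) 1"
proof -
  have "pdeg (square_minus_var v) = 2"
    by (simp add: pdeg_def keys_square_minus_var tdeg_single)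
  then show ?thesis
    using single_2_neq_single_1[of v]
    by (intro poly_mapping_eqI) (auto simp: top_part_eq_homog_part lookup_homog_part
        square_minus_var_def lookup_minus lookup_single when_def tdeg_single)
qed

lemma square_minus_var_mem_vanishing_ideal:
  assumes "fst v < n" "snd v < m" and Z: "\<forall>A\<in>Z. \<forall>p. A p = 0 \<or> A p = 1"
  shows "square_minus_var v \<in> vanishing_ideal n m Z"
proof -
  have "eval_at (square_minus_var v) A = 0" if "A \<in> Z" for A
  proof -
    have "eval_at (square_minus_var v) A = (\<Sum>\<alpha>\<in>{Poly_Mapping.single v 2, Poly_Mapping.single v 1}.
        Poly_Mapping.lookup (square_minus_var v) \<alpha> * (if Poly_Mapping.keys \<alpha> \<subseteq> {p. A p = 1} then 1 else 0))"
      using Z that by (intro eval_at_zero_one) (auto simp: keys_square_minus_var)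
    then show ?thesis
      using single_2_neq_single_1[of v] by (simp add: square_minus_var_def lookup_minus lookup_single)
  qed
  moreover have "square_minus_var v \<in> polys n m"
    using assms(1,2) by (simp add: polys_def keys_square_minus_var)
  ultimately show ?thesis
    by (simp add: vanishing_ideal_def)
qed

lemma single_mem_gr_ideal_if_exponent_ge_2:
  assumes Z: "\<forall>A\<in>Z. \<forall>p. A p = 0 \<or> A p = 1"
    and vars: "\<forall>w\<in>Poly_Mapping.keys \<alpha>. fst w < n \<and> snd w < m"
    and two: "2 \<le> Poly_Mapping.lookup \<alpha> v"
  shows "Poly_Mapping.single \<alpha> c \<in> gr_ideal n m Z"
proof -
  have "v \<in> Poly_Mapping.keys \<alpha>"
    using two by (auto simp: in_keys_iff)
  then have "square_minus_var v \<in> vanishing_ideal n m Z"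
    using vars Z by (intro square_minus_var_mem_vanishing_ideal) auto
  moreover have "square_minus_var v \<noteq> 0"
    using keys_square_minus_var[of v] by auto
  ultimately have square: "Poly_Mapping.single (Poly_Mapping.single v 2) 1 \<in> gr_ideal n m Z"
    using top_part_mem_gr_ideal top_part_square_minus_var by metis
  define \<beta> where "\<beta> = \<alpha> - Poly_Mapping.single v 2"
  have "\<alpha> = \<beta> + Poly_Mapping.single v 2"
    using two by (intro poly_mapping_eqI) (auto simp: \<beta>_def lookup_add lookup_minus lookup_single when_def)
  moreover have "Poly_Mapping.single \<beta> c \<in> polys n m"
    using vars by (intro single_mem_polys) (auto simp: \<beta>_def in_keys_iff lookup_minus)
  ultimately show ?thesis
    using gr_ideal_mult[OF _ square, of "Poly_Mapping.single \<beta> c"] by (simp add: mult_single)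
qed

lemma mem_gr_ideal_if_not_squarefree:
  assumes Z: "\<forall>A\<in>Z. \<forall>p. A p = 0 \<or> A p = 1" and g: "g \<in> polys n m"
    and not_squarefree: "\<And>\<alpha>. \<alpha> \<in> Poly_Mapping.keys g \<Longrightarrow> card (Poly_Mapping.keys \<alpha>) < tdeg \<alpha>"
  shows "g \<in> gr_ideal n m Z"
proof -
  have "Poly_Mapping.single \<alpha> (Poly_Mapping.lookup g \<alpha>) \<in> gr_ideal n m Z"
    if "\<alpha> \<in> Poly_Mapping.keys g" for \<alpha>
    using exponent_ge_2_if_card_keys_less_tdeg[OF not_squarefree[OF that]]
      single_mem_gr_ideal_if_exponent_ge_2[OF Z] g that
    by (auto simp: polys_def)
  then have "(\<Sum>\<alpha>\<in>Poly_Mapping.keys g. Poly_Mapping.single \<alpha> (Poly_Mapping.lookup g \<alpha>)) \<in> gr_ideal n m Z"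
    by (intro gr_ideal_sum) auto
  moreover have "(\<Sum>\<alpha>\<in>Poly_Mapping.keys g. Poly_Mapping.single \<alpha> (Poly_Mapping.lookup g \<alpha>)) = g"
    by (rule poly_mapping_eqI) (simp add: lookup_sum lookup_single when_def in_keys_iff)
  ultimately show ?thesis
    by simp
qed

section \<open>Deleting a one\<close>

text \<open>At a 0/1 matrix with N ones, a monomial x^a supported on the ones survives exactly
N - |supp a| of the N deletions of a single one; hence the coefficients below.\<close>

definition deletion_sum :: "nat \<Rightarrow> mpoly \<Rightarrow> mpoly" where
  "deletion_sum N f =
     Poly_Mapping.mapp (\<lambda>\<alpha> c. (of_nat N - of_nat (card (Poly_Mapping.keys \<alpha>))) * c) f"

lemma lookup_deletion_sum:
  "Poly_Mapping.lookup (deletion_sum N f) \<alpha>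
    = (of_nat N - of_nat (card (Poly_Mapping.keys \<alpha>))) * Poly_Mapping.lookup f \<alpha>"
  by (simp add: deletion_sum_def lookup_mapp when_def in_keys_iff)

lemma keys_deletion_sum_subset: "Poly_Mapping.keys (deletion_sum N f) \<subseteq> Poly_Mapping.keys f"
  by (simp add: deletion_sum_def keys_mapp_subset)

lemma keys_deletion_sum:
  assumes "\<And>\<alpha>. \<alpha> \<in> Poly_Mapping.keys f \<Longrightarrow> card (Poly_Mapping.keys \<alpha>) < N"
  shows "Poly_Mapping.keys (deletion_sum N f) = Poly_Mapping.keys f"
proof -
  have "(of_nat N - of_nat (card (Poly_Mapping.keys \<alpha>)) :: complex) \<noteq> 0"
    if "\<alpha> \<in> Poly_Mapping.keys f" for \<alpha>
    using assms[OF that] by simp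
  then show ?thesis
    by (auto simp: in_keys_iff lookup_deletion_sum)
qed

lemma sum_indicator_subset_Diff_singleton:
  assumes "finite S" "finite K"
  shows "(\<Sum>v\<in>S. if K \<subseteq> S - {v} then 1 else 0 :: complex)
       = (if K \<subseteq> S then of_nat (card S) - of_nat (card K) else 0)"
proof (cases "K \<subseteq> S")
  case True
  then have "(\<Sum>v\<in>S. if K \<subseteq> S - {v} then 1 else 0 :: complex) = (\<Sum>v\<in>S. if v \<notin> K then 1 else 0)"
    by (intro sum.cong) auto
  also have "\<dots> = of_nat (card (S - K))"
    using assms(1) by (simp add: sum.If_cases Collect_neg_eq Diff_eq)
  also have "\<dots> = of_nat (card S) - of_nat (card K)"
    using True assms by (simp add: card_Diff_subset card_mono)
  finally show ?thesis
    using True by simp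
qed (auto intro!: sum.neutral)

lemma eval_at_deletion_sum:
  assumes A: "\<forall>p. A p = 0 \<or> A p = 1" and S: "S = {p. A p = 1}" "finite S"
  shows "eval_at (deletion_sum (card S) f) A = (\<Sum>v\<in>S. eval_at f (A(v := 0)))"
proof -
  let ?ind = "\<lambda>\<alpha> T. if Poly_Mapping.keys \<alpha> \<subseteq> T then 1 else 0 :: complex"
  have "(\<Sum>v\<in>S. eval_at f (A(v := 0)))
      = (\<Sum>v\<in>S. \<Sum>\<alpha>\<in>Poly_Mapping.keys f. Poly_Mapping.lookup f \<alpha> * ?ind \<alpha> (S - {v}))"
  proof (rule sum.cong[OF refl])
    fix v
    have "{p. (A(v := 0)) p = 1} = S - {v}"
      using S by auto
    then show "eval_at f (A(v := 0)) = (\<Sum>\<alpha>\<in>Poly_Mapping.keys f. Poly_Mapping.lookup f \<alpha> * ?ind \<alpha> (S - {v}))"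
      using A eval_at_zero_one[OF finite_keys order_refl, of "A(v := 0)"] by simp
  qed
  also have "\<dots> = (\<Sum>\<alpha>\<in>Poly_Mapping.keys f. Poly_Mapping.lookup f \<alpha> * (\<Sum>v\<in>S. ?ind \<alpha> (S - {v})))"
    by (subst sum.swap) (simp add: sum_distrib_left)
  also have "\<dots> = (\<Sum>\<alpha>\<in>Poly_Mapping.keys f. Poly_Mapping.lookup (deletion_sum (card S) f) \<alpha> * ?ind \<alpha> S)"
    using S(2) by (intro sum.cong) (auto simp: sum_indicator_subset_Diff_singleton lookup_deletion_sum)
  also have "\<dots> = eval_at (deletion_sum (card S) f) A"
    using eval_at_zero_one[OF finite_keys keys_deletion_sum_subset A] S(1) by simp
  finally show ?thesis ..
qed

lemma deletion_sum_mem_vanishing_ideal: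
  assumes f: "f \<in> vanishing_ideal n m (Zset n m r)"
  shows "deletion_sum (Suc r) f \<in> vanishing_ideal n m (Zset n m (Suc r))"
proof -
  have "eval_at (deletion_sum (Suc r) f) A = 0" if A: "A \<in> Zset n m (Suc r)" for A
  proof -
    have "eval_at (deletion_sum (Suc r) f) A = (\<Sum>v\<in>{p. A p = 1}. eval_at f (A(v := 0)))"
      using eval_at_deletion_sum[OF _ refl Zset_finite_ones[OF A]] Zset_zero_one[OF A]
      by (simp add: Zset_card_ones[OF A])
    also have "\<dots> = 0"
      using f Zset_delete_one[OF A] by (simp add: vanishing_ideal_def)
    finally show ?thesis .
  qed
  with f show ?thesis
    using polys_keys_subset keys_deletion_sum_subset by (auto simp: vanishing_ideal_def)
qed

section \<open>Comparing the graded ideals\<close>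

lemma top_part_deletion_sum_congr:
  assumes Z: "\<forall>A\<in>Z. \<forall>p. A p = 0 \<or> A p = 1" and f: "f \<in> polys n m"
    and small: "\<And>\<alpha>. \<alpha> \<in> Poly_Mapping.keys f \<Longrightarrow> card (Poly_Mapping.keys \<alpha>) < N"
  shows "Poly_Mapping.map ((*) (of_nat N - of_nat (pdeg f))) (top_part f)
           - top_part (deletion_sum N f) \<in> gr_ideal n m Z"
    (is "?D \<in> _")
proof (rule mem_gr_ideal_if_not_squarefree[OF Z])
  have lookup_D: "Poly_Mapping.lookup ?D \<alpha> = (if tdeg \<alpha> = pdeg f
      then (of_nat (card (Poly_Mapping.keys \<alpha>)) - of_nat (pdeg f)) * Poly_Mapping.lookup f \<alpha> else 0)" for \<alpha>
    using keys_deletion_sum[OF small]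
    by (simp add: lookup_minus map.rep_eq when_def top_part_eq_homog_part lookup_homog_part
        lookup_deletion_sum pdeg_def algebra_simps)
  show "?D \<in> polys n m"
    using f by (rule polys_keys_subset) (auto simp: in_keys_iff lookup_D split: if_splits)
  show "card (Poly_Mapping.keys \<alpha>) < tdeg \<alpha>" if "\<alpha> \<in> Poly_Mapping.keys ?D" for \<alpha>
    using that card_keys_le_tdeg[of \<alpha>] by (auto simp: in_keys_iff lookup_D split: if_splits)
qed

lemma top_part_mem_gr_ideal_Suc:
  assumes f: "f \<in> vanishing_ideal n m (Zset n m r)" "f \<noteq> 0" and deg: "pdeg f \<le> r"
  shows "top_part f \<in> gr_ideal n m (Zset n m (Suc r))"
proof -
  let ?J = "gr_ideal n m (Zset n m (Suc r))" and ?T = "deletion_sum (Suc r) f"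
  let ?c = "of_nat (Suc r) - of_nat (pdeg f) :: complex"
  have small: "card (Poly_Mapping.keys \<alpha>) < Suc r" if "\<alpha> \<in> Poly_Mapping.keys f" for \<alpha>
    using card_keys_le_tdeg[of \<alpha>] tdeg_le_pdeg[OF that] deg by simp
  then have "Poly_Mapping.keys ?T \<noteq> {}"
    using f(2) keys_deletion_sum by simp
  then have "top_part ?T \<in> ?J"
    using deletion_sum_mem_vanishing_ideal[OF f(1)] by (intro top_part_mem_gr_ideal) auto
  moreover have "Poly_Mapping.map ((*) ?c) (top_part f) - top_part ?T \<in> ?J"
    using f(1) small by (intro top_part_deletion_sum_congr) (auto simp: vanishing_ideal_def Zset_zero_one)
  ultimately have "Poly_Mapping.map ((*) ?c) (top_part f) \<in> ?J"
    using gr_ideal_add by fastforce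
  moreover have "?c \<noteq> 0"
    using deg by (simp del: of_nat_Suc)
  ultimately show ?thesis
    by (rule gr_ideal_scale_cancel[rotated])
qed

lemma homog_mem_gr_ideal_Zset_Suc:
  assumes "F \<in> gr_ideal n m (Zset n m r)" "homog d F" "d \<le> r"
  shows "F \<in> gr_ideal n m (Zset n m (Suc r))"
  using assms(1,2) unfolding gr_ideal_def
proof (rule homog_mem_ideal_gen_low_degree)
  fix h
  assume "h \<in> top_part ` (vanishing_ideal n m (Zset n m r) - {0})"
  then obtain f where "h = top_part f" "f \<in> vanishing_ideal n m (Zset n m r)" "f \<noteq> 0"
    by blast
  then show "\<exists>e. homog e h \<and> (e \<le> d \<longrightarrow> h \<in> ideal_gen (polys n m)
      (top_part ` (vanishing_ideal n m (Zset n m (Suc r)) - {0})))"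
    using homog_top_part top_part_mem_gr_ideal_Suc assms(3) unfolding gr_ideal_def by fastforce
qed

theorem mainTheorem10:
  fixes n m r d :: nat
  assumes "0 < n" and "0 < m"
    and "d \<le> r" and "r < min m n"
  shows "\<exists>\<phi>. equiv_surj_quot n m d (gr_ideal n m (Zset n m r))
                                   (gr_ideal n m (Zset n m (Suc r))) \<phi>"
proof -
  have "f - g \<in> gr_ideal n m (Zset n m (Suc r))"
    if "homog d f" "homog d g" "f - g \<in> gr_ideal n m (Zset n m r)" for f g
    using that by (intro homog_mem_gr_ideal_Zset_Suc[OF _ _ assms(3)] homog_diff)
  moreover have "0 \<in> gr_ideal n m (Zset n m (Suc r))"
    unfolding gr_ideal_def by (rule ideal_gen_zero)
  ultimately have "equiv_surj_quot n m d (gr_ideal n m (Zset n m r)) (gr_ideal n m (Zset n m (Suc r))) id"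
    by (auto simp: equiv_surj_quot_def)
  then show ?thesis
    by blast
qed

end
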